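(* Let $G$ be a connected triangle-free graph with no full star-cutset. Then $G$ has no cut-vertex of degree at least three. Moreover, if $G$ is not a path with at most $4$ vertices, then $G$ has minimum degree at least $2$.
   Context: A full star-cutset of a connected graph $G$ is a set $N[u]=\{u\}\cup N(u)$ whose removal disconnects $G$. *)

theory Defs
  imports Main
begin

definition simple_graph :: "'a set \<Rightarrow> ('a \<Rightarrow> 'a \<Rightarrow> bool) \<Rightarrow> bool" where
  "simple_graph V E \<longleftrightarrow> finite V \<and> (\<forall>x y. E x y \<longrightarrow> x \<in> V \<and> y \<in> V)
     \<and> (\<forall>x y. E x y \<longrightarrow> E y x) \<and> (\<forall>x. \<not> E x x)"

definition reach_in :: "('a \<Rightarrow> 'a \<Rightarrow> bool) \<Rightarrow> 'a set \<Rightarrow> 'a \<Rightarrow> 'a \<Rightarrow> bool" where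
  "reach_in E S x y \<longleftrightarrow> (\<lambda>u v. E u v \<and> u \<in> S \<and> v \<in> S)\<^sup>*\<^sup>* x y"

definition connected_graph :: "'a set \<Rightarrow> ('a \<Rightarrow> 'a \<Rightarrow> bool) \<Rightarrow> bool" where
  "connected_graph V E \<longleftrightarrow> V \<noteq> {} \<and> (\<forall>x\<in>V. \<forall>y\<in>V. reach_in E V x y)"

definition disconnects :: "'a set \<Rightarrow> ('a \<Rightarrow> 'a \<Rightarrow> bool) \<Rightarrow> 'a set \<Rightarrow> bool" where
  "disconnects V E X \<longleftrightarrow> (\<exists>x\<in>V - X. \<exists>y\<in>V - X. \<not> reach_in E (V - X) x y)"

definition nbhd :: "('a \<Rightarrow> 'a \<Rightarrow> bool) \<Rightarrow> 'a \<Rightarrow> 'a set" where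
  "nbhd E u = {v. E u v}"

definition closed_nbhd :: "('a \<Rightarrow> 'a \<Rightarrow> bool) \<Rightarrow> 'a \<Rightarrow> 'a set" where
  "closed_nbhd E u = insert u (nbhd E u)"

definition degree :: "('a \<Rightarrow> 'a \<Rightarrow> bool) \<Rightarrow> 'a \<Rightarrow> nat" where
  "degree E u = card (nbhd E u)"

definition has_full_star_cutset :: "'a set \<Rightarrow> ('a \<Rightarrow> 'a \<Rightarrow> bool) \<Rightarrow> bool" where
  "has_full_star_cutset V E \<longleftrightarrow> (\<exists>u\<in>V. disconnects V E (closed_nbhd E u))"

definition cut_vertex :: "'a set \<Rightarrow> ('a \<Rightarrow> 'a \<Rightarrow> bool) \<Rightarrow> 'a \<Rightarrow> bool" where
  "cut_vertex V E v \<longleftrightarrow> v \<in> V \<and> disconnects V E {v}"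

definition triangle_free :: "('a \<Rightarrow> 'a \<Rightarrow> bool) \<Rightarrow> bool" where
  "triangle_free E \<longleftrightarrow> \<not> (\<exists>x y z. E x y \<and> E y z \<and> E x z)"

definition is_path_graph :: "'a set \<Rightarrow> ('a \<Rightarrow> 'a \<Rightarrow> bool) \<Rightarrow> bool" where
  "is_path_graph V E \<longleftrightarrow> (\<exists>xs. distinct xs \<and> set xs = V \<and>
     (\<forall>x y. E x y \<longleftrightarrow> (\<exists>i. Suc i < length xs \<and>
        ((x = xs ! i \<and> y = xs ! Suc i) \<or> (y = xs ! i \<and> x = xs ! Suc i)))))"

end

theory Submission
  imports Defs
begin

text \<open>Among three neighbours of a cut-vertex v, some two x and y lie in different
  components of G - v; the star N[p] of the third neighbour p contains v but, by
  triangle-freeness, neither x nor y, so it separates them as well.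
  For a vertex of degree at most one one walks outwards: if v is a leaf with neighbour u
  and u has a further neighbour w, then v is isolated in G - N[w], so V = {v} \<union> N[w];
  then G - N[u] is the set of neighbours of w other than u, an independent set, hence
  at most one vertex, and G is a path on at most four vertices.\<close>

lemma reach_in_refl [simp]: "reach_in E S x x"
  by (simp add: reach_in_def)

lemma reach_in_trans: "reach_in E S x y \<Longrightarrow> reach_in E S y z \<Longrightarrow> reach_in E S x z"
  unfolding reach_in_def by (rule rtranclp_trans)

lemma reach_in_mono: "reach_in E S x y \<Longrightarrow> S \<subseteq> T \<Longrightarrow> reach_in E T x y"
  unfolding reach_in_def by (erule rtranclp_mono[THEN predicate2D, rotated]) auto

lemma reach_in_sym:
  assumes "\<And>x y. E x y \<Longrightarrow> E y x" and "reach_in E S x y"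
  shows "reach_in E S y x"
proof -
  let ?R = "\<lambda>u v. E u v \<and> u \<in> S \<and> v \<in> S"
  have "?R\<inverse>\<inverse> = ?R"
    using assms(1) by blast
  moreover have "?R\<inverse>\<inverse>\<^sup>*\<^sup>* y x"
    using assms(2) unfolding reach_in_def by (rule rtranclp_converseI)
  ultimately show ?thesis
    unfolding reach_in_def by simp
qed

lemma reach_in_closed:
  assumes "reach_in E S x y" and "x \<in> A"
    and "\<And>a b. a \<in> A \<Longrightarrow> a \<in> S \<Longrightarrow> b \<in> S \<Longrightarrow> E a b \<Longrightarrow> b \<in> A"
  shows "y \<in> A"
  using assms(1,2) unfolding reach_in_def
  by (induction rule: rtranclp_induct) (auto intro: assms(3))

lemma reach_in_last_edge:
  assumes "reach_in E V x v" and "x \<in> V - {v}"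
  shows "\<exists>n. E n v \<and> reach_in E (V - {v}) x n"
  using assms unfolding reach_in_def
proof (induction rule: converse_rtranclp_induct)
  case (step x y)
  show ?case
  proof (cases "y = v")
    case True
    then show ?thesis using step.hyps(1) by blast
  next
    case False
    with step obtain n where "E n v" "(\<lambda>u w. E u w \<and> u \<in> V - {v} \<and> w \<in> V - {v})\<^sup>*\<^sup>* y n"
      by auto
    moreover have "E x y \<and> x \<in> V - {v} \<and> y \<in> V - {v}"
      using step False by blast
    ultimately show ?thesis by (blast intro: converse_rtranclp_into_rtranclp)
  qed
qed simp

lemma finite_nbhd: "simple_graph V E \<Longrightarrow> finite (nbhd E v)"
  unfolding simple_graph_def nbhd_def by (auto intro: finite_subset)

lemma triangle_freeD: "triangle_free E \<Longrightarrow> E x y \<Longrightarrow> E y z \<Longrightarrow> E x z \<Longrightarrow> False"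
  unfolding triangle_free_def by blast

lemma cut_vertex_separates_neighbours:
  assumes sym: "\<And>x y. E x y \<Longrightarrow> E y x" and "connected_graph V E" and "cut_vertex V E v"
  obtains a b where "E v a" "E v b" "\<not> reach_in E (V - {v}) a b"
proof -
  obtain x y where xy: "x \<in> V - {v}" "y \<in> V - {v}" "\<not> reach_in E (V - {v}) x y"
    using assms(3) by (auto simp: cut_vertex_def disconnects_def)
  have reach: "reach_in E V x v" "reach_in E V y v"
    using assms(2,3) xy by (auto simp: connected_graph_def cut_vertex_def)
  obtain a b where "E a v" "reach_in E (V - {v}) x a" "E b v" "reach_in E (V - {v}) y b"
    using reach_in_last_edge[OF reach(1)] reach_in_last_edge[OF reach(2)] xy by blast
  moreover from this have "\<not> reach_in E (V - {v}) a b"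
    using xy(3) by (meson reach_in_sym reach_in_trans sym)
  ultimately show thesis
    using that sym by blast
qed

lemma star_of_neighbour_disconnects:
  assumes "simple_graph V E" and "triangle_free E"
    and "E v p" "E v x" "E v y" "p \<noteq> x" "p \<noteq> y"
    and "\<not> reach_in E (V - {v}) x y"
  shows "disconnects V E (closed_nbhd E p)"
proof -
  have "\<not> E p x" "\<not> E p y"
    using triangle_freeD[OF assms(2,3) _ assms(4)] triangle_freeD[OF assms(2,3) _ assms(5)]
    by (auto intro: notI)
  then have outside: "x \<in> V - closed_nbhd E p" "y \<in> V - closed_nbhd E p"
    using assms(1,4-7) by (auto simp: simple_graph_def closed_nbhd_def nbhd_def)
  have "V - closed_nbhd E p \<subseteq> V - {v}"
    using assms(1,3) by (auto simp: simple_graph_def closed_nbhd_def nbhd_def)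
  then have "\<not> reach_in E (V - closed_nbhd E p) x y"
    using assms(8) reach_in_mono by metis
  with outside show ?thesis
    unfolding disconnects_def by (intro bexI)
qed

lemma cut_vertex_degree_less_3:
  assumes graph: "simple_graph V E" and "connected_graph V E" and tri: "triangle_free E"
    and "\<not> has_full_star_cutset V E" and cut: "cut_vertex V E v"
  shows "degree E v < 3"
proof (rule ccontr)
  assume "\<not> degree E v < 3"
  have sym: "\<And>x y. E x y \<Longrightarrow> E y x" and inV: "\<And>x y. E x y \<Longrightarrow> x \<in> V"
    using graph by (auto simp: simple_graph_def)
  obtain a b where ab: "E v a" "E v b" "\<not> reach_in E (V - {v}) a b"
    using cut_vertex_separates_neighbours[OF sym assms(2) cut] by blast
  have "\<not> nbhd E v \<subseteq> {a, b}"
  proof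
    assume "nbhd E v \<subseteq> {a, b}"
    then have "card (nbhd E v) \<le> card {a, b}"
      by (rule card_mono[rotated]) simp
    also have "\<dots> \<le> 2"
      by (simp add: card_insert_if)
    finally show False
      using \<open>\<not> degree E v < 3\<close> by (simp add: degree_def)
  qed
  then obtain c where c: "E v c" "c \<noteq> a" "c \<noteq> b"
    by (auto simp: nbhd_def)
  have "a \<noteq> b"
    using ab(3) by auto
  have no_star: "\<not> disconnects V E (closed_nbhd E p)" if "E v p" for p
    using assms(4) inV[OF sym[OF that]] unfolding has_full_star_cutset_def by simp
  show False
  proof (cases "reach_in E (V - {v}) a c")
    case True
    have "\<not> reach_in E (V - {v}) c b"
      using reach_in_trans[OF True] ab(3) by auto
    with star_of_neighbour_disconnects[OF graph tri ab(1) c(1) ab(2) c(2)[symmetric] \<open>a \<noteq> b\<close>]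
    show False
      using no_star[OF ab(1)] by simp
  next
    case False
    with star_of_neighbour_disconnects[OF graph tri ab(2) ab(1) c(1) \<open>a \<noteq> b\<close>[symmetric] c(3)[symmetric]]
    show False
      using no_star[OF ab(2)] by simp
  qed
qed

lemma connected_graph_closed_subset_eq:
  assumes "connected_graph V E" and "a \<in> A" and "A \<subseteq> V"
    and "\<And>x y. x \<in> A \<Longrightarrow> E x y \<Longrightarrow> y \<in> A"
  shows "V = A"
proof
  show "V \<subseteq> A"
  proof
    fix y assume "y \<in> V"
    then have "reach_in E V a y"
      using assms(1-3) by (auto simp: connected_graph_def)
    then show "y \<in> A"
      using assms(2,4) by (rule reach_in_closed)
  qed
qed (fact assms(3))

lemma no_star_cutset_isolated:
  assumes "\<not> disconnects V E (closed_nbhd E w)" and "x \<in> V - closed_nbhd E w"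
    and "\<And>y. E x y \<Longrightarrow> y \<in> closed_nbhd E w"
  shows "V - closed_nbhd E w = {x}"
proof -
  have "y = x" if "y \<in> V - closed_nbhd E w" for y
  proof -
    have "reach_in E (V - closed_nbhd E w) x y"
      using assms(1,2) that unfolding disconnects_def by simp
    then show "y = x"
      by (rule reach_in_closed[where A = "{x}", simplified]) (use assms(3) in auto)
  qed
  then show ?thesis
    using assms(2) by blast
qed

lemma path_graph_of_list:
  assumes "distinct xs" and "set xs = V" and "length xs \<le> 4"
    and "\<And>x y. E x y \<Longrightarrow> x \<in> V"
    and "\<And>x y. x \<in> V \<Longrightarrow> E x y \<longleftrightarrow> (\<exists>i. Suc i < length xs \<and>
      ((x = xs ! i \<and> y = xs ! Suc i) \<or> (y = xs ! i \<and> x = xs ! Suc i)))"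
  shows "is_path_graph V E \<and> card V \<le> 4"
proof -
  have "E x y \<longleftrightarrow> (\<exists>i. Suc i < length xs \<and>
      ((x = xs ! i \<and> y = xs ! Suc i) \<or> (y = xs ! i \<and> x = xs ! Suc i)))" for x y
    using assms(2,4,5) nth_mem[of _ xs] by (metis Suc_lessD)
  then show ?thesis
    using assms(1-3) distinct_card unfolding is_path_graph_def by fastforce
qed

lemma pendant_vertex_star:
  assumes graph: "simple_graph V E" and tri: "triangle_free E"
    and no_star: "\<not> disconnects V E (closed_nbhd E w)"
    and v: "nbhd E v = {u}" and uw: "E u w" "w \<noteq> v"
  shows "V = insert v (closed_nbhd E w)" and "nbhd E u = {v, w}"
proof -
  have sym: "\<And>x y. E x y \<Longrightarrow> E y x" and inV: "\<And>x y. E x y \<Longrightarrow> x \<in> V \<and> y \<in> V"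
    and irrefl: "\<And>x. \<not> E x x"
    using graph by (auto simp: simple_graph_def)
  have v_iff: "E v y \<longleftrightarrow> y = u" for y
    using v by (auto simp: nbhd_def)
  have "v \<in> V - closed_nbhd E w"
    using v_iff inV[of v u] sym[of w v] uw irrefl by (auto simp: closed_nbhd_def nbhd_def)
  then have "V - closed_nbhd E w = {v}"
    by (rule no_star_cutset_isolated[OF no_star])
      (use v_iff sym[OF uw(1)] in \<open>auto simp: closed_nbhd_def nbhd_def\<close>)
  moreover have "closed_nbhd E w \<subseteq> V"
    using inV[OF uw(1)] inV[of w] by (auto simp: closed_nbhd_def nbhd_def)
  ultimately show V: "V = insert v (closed_nbhd E w)"
    by blast
  show "nbhd E u = {v, w}"
  proof (intro equalityI subsetI)
    fix y assume "y \<in> nbhd E u"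
    then have "E u y" "y \<in> V"
      using inV by (auto simp: nbhd_def)
    moreover have "\<not> E w y" if "E u y"
      using triangle_freeD[OF tri uw(1) _ that] by blast
    ultimately show "y \<in> {v, w}"
      using V by (auto simp: closed_nbhd_def nbhd_def)
  qed (use uw v_iff sym[of v u] in \<open>auto simp: nbhd_def\<close>)
qed

lemma pendant_vertex_far_end:
  assumes graph: "simple_graph V E" and tri: "triangle_free E"
    and no_star: "\<not> disconnects V E (closed_nbhd E u)"
    and V: "V = insert v (closed_nbhd E w)"
    and v: "nbhd E v = {u}" and u: "nbhd E u = {v, w}" and wx: "E w x" "x \<noteq> u"
  shows "nbhd E w = {u, x}" and "nbhd E x = {w}"
proof -
  have sym: "\<And>x y. E x y \<Longrightarrow> E y x" and inV: "\<And>x y. E x y \<Longrightarrow> x \<in> V \<and> y \<in> V"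
    and irrefl: "\<And>x. \<not> E x x"
    using graph by (auto simp: simple_graph_def)
  have v_iff: "E v y \<longleftrightarrow> y = u" and u_iff: "E u y \<longleftrightarrow> y = v \<or> y = w" for y
    using v u by (auto simp: nbhd_def)
  have "\<not> E w v"
    using v_iff[of w] u_iff[of w] sym[of w v] irrefl[of u] by blast
  have x_nbrs: "y = w" if "E x y" for y
  proof -
    have "y \<noteq> v"
      using v_iff[of x] sym[OF that] wx(2) by blast
    moreover have "\<not> E w y"
      using triangle_freeD[OF tri wx(1) that] by blast
    ultimately show "y = w"
      using inV[OF that] V by (auto simp: closed_nbhd_def nbhd_def)
  qed
  have "x \<in> V - closed_nbhd E u"
    using inV[OF wx(1)] wx u_iff[of x] irrefl[of w] \<open>\<not> E w v\<close>
    by (auto simp: closed_nbhd_def nbhd_def)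
  then have outside: "V - closed_nbhd E u = {x}"
    by (rule no_star_cutset_isolated[OF no_star])
      (use x_nbrs u_iff in \<open>auto simp: closed_nbhd_def nbhd_def\<close>)
  show "nbhd E w = {u, x}"
  proof (intro equalityI subsetI)
    fix y assume "y \<in> nbhd E w"
    then have "E w y"
      by (simp add: nbhd_def)
    then have "y \<in> V - closed_nbhd E u \<or> y = u"
      using inV[of w y] irrefl[of w] u_iff[of y] \<open>\<not> E w v\<close>
      by (auto simp: closed_nbhd_def nbhd_def)
    then show "y \<in> {u, x}"
      using outside by blast
  qed (use u_iff[of w] sym[of u w] wx in \<open>auto simp: nbhd_def\<close>)
  show "nbhd E x = {w}"
    using x_nbrs sym[OF wx(1)] unfolding nbhd_def by blast
qed

lemma pendant_vertex_two_steps_path_graph: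
  assumes graph: "simple_graph V E" and tri: "triangle_free E"
    and no_star: "\<And>z. z \<in> V \<Longrightarrow> \<not> disconnects V E (closed_nbhd E z)"
    and v: "nbhd E v = {u}" and uw: "E u w" "w \<noteq> v"
  shows "is_path_graph V E \<and> card V \<le> 4"
proof -
  have sym: "\<And>x y. E x y \<Longrightarrow> E y x" and inV: "\<And>x y. E x y \<Longrightarrow> x \<in> V \<and> y \<in> V"
    and irrefl: "\<And>x. \<not> E x x"
    using graph by (auto simp: simple_graph_def)
  have V: "V = insert v (closed_nbhd E w)" and u: "nbhd E u = {v, w}"
    using pendant_vertex_star[OF graph tri no_star v uw] inV[OF uw(1)] by blast+
  have v_iff: "E v y \<longleftrightarrow> y = u" and u_iff: "E u y \<longleftrightarrow> y = v \<or> y = w" for y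
    using v u by (auto simp: nbhd_def)
  have "v \<noteq> u" "w \<noteq> u" "u \<in> V"
    using v_iff[of u] irrefl uw(1) inV[OF uw(1)] by auto
  consider "nbhd E w = {u}" | x where "E w x" "x \<noteq> u"
    using sym[OF uw(1)] by (auto simp: nbhd_def)
  then show ?thesis
  proof cases
    case 1
    then have w_iff: "E w y \<longleftrightarrow> y = u" for y
      by (auto simp: nbhd_def)
    have "V = {v, u, w}"
      using V 1 by (auto simp: closed_nbhd_def)
    then show ?thesis
      by (intro path_graph_of_list[of "[v, u, w]"])
        (use inV v_iff u_iff w_iff uw \<open>v \<noteq> u\<close> \<open>w \<noteq> u\<close> in \<open>auto simp: Ex_less_Suc2\<close>)
  next
    case (2 x)
    have w: "nbhd E w = {u, x}" and x: "nbhd E x = {w}"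
      using pendant_vertex_far_end[OF graph tri no_star[OF \<open>u \<in> V\<close>] V v u 2] by blast+
    have w_iff: "E w y \<longleftrightarrow> y = u \<or> y = x" and x_iff: "E x y \<longleftrightarrow> y = w" for y
      using w x by (auto simp: nbhd_def)
    have "V = {v, u, w, x}"
      using V w by (auto simp: closed_nbhd_def)
    moreover have "distinct [v, u, w, x]"
      using uw 2 \<open>v \<noteq> u\<close> \<open>w \<noteq> u\<close> irrefl[of w] v_iff[of w] sym[of w x] by auto
    ultimately show ?thesis
      by (intro path_graph_of_list[of "[v, u, w, x]"])
        (use inV v_iff u_iff w_iff x_iff in \<open>auto simp: Ex_less_Suc2\<close>)
  qed
qed

lemma pendant_vertex_path_graph:
  assumes graph: "simple_graph V E" and conn: "connected_graph V E" and tri: "triangle_free E"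
    and "\<not> has_full_star_cutset V E" and v: "nbhd E v = {u}"
  shows "is_path_graph V E \<and> card V \<le> 4"
proof -
  have sym: "\<And>x y. E x y \<Longrightarrow> E y x" and inV: "\<And>x y. E x y \<Longrightarrow> x \<in> V \<and> y \<in> V"
    and irrefl: "\<And>x. \<not> E x x"
    using graph by (auto simp: simple_graph_def)
  have no_star: "\<not> disconnects V E (closed_nbhd E z)" if "z \<in> V" for z
    using assms(4) that unfolding has_full_star_cutset_def by blast
  have v_iff: "E v y \<longleftrightarrow> y = u" for y
    using v by (auto simp: nbhd_def)
  have "E u v" "v \<noteq> u"
    using v_iff[of u] sym[of v u] irrefl[of v] by auto
  consider "nbhd E u = {v}" | w where "E u w" "w \<noteq> v"
    using \<open>E u v\<close> by (auto simp: nbhd_def)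
  then show ?thesis
  proof cases
    case 1
    then have u_iff: "E u y \<longleftrightarrow> y = v" for y
      by (auto simp: nbhd_def)
    have "V = {v, u}"
      by (rule connected_graph_closed_subset_eq[OF conn, of v])
        (use inV \<open>E u v\<close> v_iff u_iff in auto)
    then show ?thesis
      by (intro path_graph_of_list[of "[v, u]"]) (use inV v_iff u_iff \<open>v \<noteq> u\<close> in auto)
  next
    case 2
    then show ?thesis
      using pendant_vertex_two_steps_path_graph[OF graph tri no_star v] by blast
  qed
qed

lemma degree_less_2_path_graph:
  assumes graph: "simple_graph V E" and conn: "connected_graph V E" and "triangle_free E"
    and "\<not> has_full_star_cutset V E" and "v \<in> V" and "degree E v < 2"
  shows "is_path_graph V E \<and> card V \<le> 4"
proof -
  have "card (nbhd E v) \<le> 1"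
    using assms(6) by (simp add: degree_def)
  then consider "nbhd E v = {}" | u where "nbhd E v = {u}"
    using finite_nbhd[OF graph] by (metis card_1_singletonE card_0_eq le_Suc_eq le_zero_eq One_nat_def)
  then show ?thesis
  proof cases
    case 1
    then have "V = {v}"
      using connected_graph_closed_subset_eq[OF conn, of v "{v}"] assms(5) by (auto simp: nbhd_def)
    moreover have "\<not> E x y" for x y
      using graph \<open>V = {v}\<close> unfolding simple_graph_def by blast
    ultimately show ?thesis
      by (intro path_graph_of_list[of "[v]"]) auto
  next
    case 2
    then show ?thesis
      using pendant_vertex_path_graph[OF graph conn assms(3,4)] by blast
  qed
qed

theorem mainTheorem17:
  fixes V :: "'a set" and E :: "'a \<Rightarrow> 'a \<Rightarrow> bool"
  assumes "simple_graph V E"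
    and "connected_graph V E"
    and "triangle_free E"
    and "\<not> has_full_star_cutset V E"
  shows "(\<forall>v. cut_vertex V E v \<longrightarrow> degree E v < 3)
    \<and> (\<not> (is_path_graph V E \<and> card V \<le> 4) \<longrightarrow> (\<forall>v\<in>V. degree E v \<ge> 2))"
  using cut_vertex_degree_less_3[OF assms] degree_less_2_path_graph[OF assms]
  by (meson not_less)

end
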